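(* Let $p$ be an odd prime, let $k\ge 1$ and $t\ge 0$ be integers, and let $\alpha\in\mathbb{Q}_p$ have the eventually periodic Browkin continued fraction expansion $$\alpha=[0,b_1,\ldots,b_k,\overline{b_{k+1},\ldots,b_{k+t+1}}].$$ Let $B_{-2}=1$, $B_{-1}=0$, $B_i=b_iB_{i-1}+B_{i-2}$ for $i\ge 0$ (with $b_0=0$). Then the naive height of $\alpha$ satisfies $$h(\alpha)\le \frac{8}{p^2}\lvert B_{k+t+1}\rvert_p^2\,\lvert B_k\rvert_p^2.$$
   Context: Every $x\in\mathbb{Q}_p$ has a unique expansion $x=\sum_{i\ge r}a_ip^i$ with $r\in\mathbb{Z}$ and $a_i\in\{-\frac{p-1}{2},\ldots,\frac{p-1}{2}\}$; Browkin's function is $s(x)=\sum_{i=r}^{0}a_ip^i$. The Browkin continued fraction expansion $[b_0,b_1,\ldots]$ of $\alpha_0\in\mathbb{Q}_p$ is obtained by iterating $b_i=s(\alpha_i)$, $\alpha_{i+1}=1/(\alpha_i-b_i)$ as long as $\alpha_i\neq b_i$. The overline denotes the block repeated periodically forever. For an algebraic number $\alpha$ that is a root of a nonzero polynomial $c_dx^d+\cdots+c_0\in\mathbb{Z}[x]$ of degree $d$ equal to the degree of $\alpha$, the naive height is $h(\alpha)=\max_i\lvert c_i\rvert_\infty/\gcd(c_0,\ldots,c_d)$. *)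

theory Defs
  imports Complex_Main "HOL-Computational_Algebra.Computational_Algebra"
begin

definition padic_val_rat :: "nat \<Rightarrow> rat \<Rightarrow> int" where
  "padic_val_rat p q = (case quotient_of q of (a, b) \<Rightarrow>
      int (multiplicity (int p) a) - int (multiplicity (int p) b))"

definition padic_abs_rat :: "nat \<Rightarrow> rat \<Rightarrow> real" where
  "padic_abs_rat p q = (if q = 0 then 0 else real p powr (- real_of_int (padic_val_rat p q)))"

text \<open>A field of characteristic 0 with an absolute value N is (a copy of) Q_p:
  N is a non-archimedean absolute value extending the p-adic absolute value on Q,
  the field is complete for N, and Q is dense in it.  These properties characterize
  Q_p up to isometric isomorphism.\<close>
definition padic_field :: "nat \<Rightarrow> ('a::field_char_0 \<Rightarrow> real) \<Rightarrow> bool" where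
  "padic_field p N \<longleftrightarrow>
     (\<forall>x. N x \<ge> 0) \<and> (\<forall>x. N x = 0 \<longleftrightarrow> x = 0) \<and>
     (\<forall>x y. N (x * y) = N x * N y) \<and>
     (\<forall>x y. N (x + y) \<le> max (N x) (N y)) \<and>
     (\<forall>q. N (of_rat q) = padic_abs_rat p q) \<and>
     (\<forall>f::nat \<Rightarrow> 'a. (\<forall>e>0. \<exists>M. \<forall>m\<ge>M. \<forall>n\<ge>M. N (f m - f n) < e)
          \<longrightarrow> (\<exists>x. (\<lambda>n. N (f n - x)) \<longlonglongrightarrow> 0)) \<and>
     (\<forall>x e. e > 0 \<longrightarrow> (\<exists>q. N (x - of_rat q) < e))"

definition browkin_digits :: "nat \<Rightarrow> int set" where
  "browkin_digits p = {- ((int p - 1) div 2) .. (int p - 1) div 2}"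

definition is_padic_expansion :: "nat \<Rightarrow> ('a::field_char_0 \<Rightarrow> real) \<Rightarrow> 'a \<Rightarrow> (int \<Rightarrow> int) \<Rightarrow> bool" where
  "is_padic_expansion p N x a \<longleftrightarrow>
     (\<forall>i. a i \<in> browkin_digits p) \<and>
     (\<exists>r. (\<forall>i<r. a i = 0) \<and>
          (\<lambda>n. N ((\<Sum>i=r..int n. of_int (a i) * (of_nat p) powi i) - x)) \<longlonglongrightarrow> 0)"

definition browkin_s :: "nat \<Rightarrow> ('a::field_char_0 \<Rightarrow> real) \<Rightarrow> 'a \<Rightarrow> 'a" where
  "browkin_s p N x = (THE y. \<exists>a. is_padic_expansion p N x a \<and>
       y = (\<Sum>i\<in>{i. i \<le> 0 \<and> a i \<noteq> 0}. of_int (a i) * (of_nat p) powi i))"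

fun browkin_alpha :: "nat \<Rightarrow> ('a::field_char_0 \<Rightarrow> real) \<Rightarrow> 'a \<Rightarrow> nat \<Rightarrow> 'a" where
  "browkin_alpha p N x 0 = x"
| "browkin_alpha p N x (Suc n) =
     inverse (browkin_alpha p N x n - browkin_s p N (browkin_alpha p N x n))"

text \<open>Shifted denominators: browkin_B b (i+2) = B_i, with browkin_B b 0 = B_{-2} = 1, browkin_B b 1 = B_{-1} = 0.\<close>
fun browkin_B :: "(nat \<Rightarrow> 'a::field) \<Rightarrow> nat \<Rightarrow> 'a" where
  "browkin_B b 0 = 1"
| "browkin_B b (Suc 0) = 0"
| "browkin_B b (Suc (Suc n)) = b n * browkin_B b (Suc n) + browkin_B b n"

definition naive_height :: "'a::field_char_0 \<Rightarrow> real" where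
  "naive_height x = (THE h. \<exists>P::int poly. P \<noteq> 0 \<and> poly (map_poly of_int P) x = 0 \<and>
      (\<forall>Q::int poly. Q \<noteq> 0 \<and> poly (map_poly of_int Q) x = 0 \<longrightarrow> degree P \<le> degree Q) \<and>
      h = real_of_int (Max (abs ` set (coeffs P))) / real_of_int (content P))"

end

theory Submission
  imports Defs
begin

(*
  Write the partial quotients as b_i = c_i / p^e_i with p not dividing c_i, e_i >= 1 and
  2 |c_i| < p^(e_i + 1).  Multiplying the numerators A_j and denominators B_j of the convergents
  (indices shifted by two as in browkin_B) by p^E_j, where E_(j+2) = e_0 + ... + e_j, turns them
  into integers of absolute value at most p^(2 E_j), and |B_j|_p = p^E_j.  The errors
  d_j = alpha B_j - A_j satisfy alpha_j d_(j+1) = - d_j, so the periodicity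
  alpha_(k+1) = alpha_(k+t+2) gives d_(k+1) d_(k+t+3) = d_(k+t+2) d_(k+2).  Hence alpha is a root
  of the integer quadratic  u L_(k+1) L_(k+t+3) - w L_(k+t+2) L_(k+2),  where L_j = p^E_j (B_j x - A_j)
  and the powers u, w of p balance the two products.  It is nonzero because distinct convergents
  differ, and its coefficients are at most 4 p^(2 E_(k+2) + 2 E_(k+t+3) - 2).  A nonzero integer
  polynomial of degree at most 2 vanishing at alpha bounds the naive height by its largest
  coefficient.
*)


section \<open>Non-archimedean absolute values\<close>

locale nonarch_abs =
  fixes N :: "'a::field \<Rightarrow> real"
  assumes N_nonneg: "N x \<ge> 0"
    and N_eq_0_iff [simp]: "N x = 0 \<longleftrightarrow> x = 0"
    and N_mult: "N (x * y) = N x * N y"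
    and N_add_le: "N (x + y) \<le> max (N x) (N y)"
begin

lemma N_0 [simp]: "N 0 = 0"
  by simp

lemma N_pos_iff: "N x > 0 \<longleftrightarrow> x \<noteq> 0"
  using N_nonneg[of x] by (auto simp: order_le_less)

lemma N_1 [simp]: "N 1 = 1"
  using N_mult[of 1 1] by simp

lemma N_minus [simp]: "N (- x) = N x"
proof -
  have "N (- 1) * N (- 1) = 1"
    using N_mult[of "- 1" "- 1"] by simp
  then have "N (- 1) = 1"
    using N_nonneg[of "- 1"] power2_eq_1_iff[of "N (- 1)"] by (auto simp: power2_eq_square)
  then show ?thesis
    using N_mult[of "- 1" x] by simp
qed

lemma N_diff_commute: "N (x - y) = N (y - x)"
  using N_minus[of "x - y"] by simp

lemma N_diff_le: "N (x - y) \<le> max (N x) (N y)"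
  using N_add_le[of x "- y"] by simp

lemma N_inverse: "N (inverse x) = inverse (N x)"
proof (cases "x = 0")
  case False
  then have "N (inverse x) * N x = 1"
    using N_mult[of "inverse x" x] by simp
  then show ?thesis
    by (metis inverse_unique mult.commute)
qed simp

lemma N_divide: "N (x / y) = N x / N y"
  by (simp add: divide_inverse N_mult N_inverse)

lemma N_power: "N (x ^ n) = N x ^ n"
  by (induction n) (simp_all add: N_mult)

lemma N_power_int: "N (x powi i) = N x powi i"
  by (cases "i \<ge> 0") (simp_all add: power_int_def N_power N_inverse)

lemma N_add_eq_left:
  assumes "N y < N x"
  shows "N (x + y) = N x"
proof -
  have "N (x + y) \<le> N x"
    using N_add_le[of x y] assms by simp
  moreover have "N x \<le> max (N (x + y)) (N y)"
    using N_diff_le[of "x + y" y] by simp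
  ultimately show ?thesis
    using assms by linarith
qed

lemma N_sum_le:
  assumes "\<And>i. i \<in> A \<Longrightarrow> N (f i) \<le> c" and "c \<ge> 0"
  shows "N (sum f A) \<le> c"
  using assms
proof (induction A rule: infinite_finite_induct)
  case (insert i A)
  then have "max (N (f i)) (N (sum f A)) \<le> c"
    by simp
  then show ?case
    using insert.hyps N_add_le[of "f i" "sum f A"] by (metis order_trans sum.insert)
qed simp_all

lemma N_diff_inverse:
  assumes "x \<noteq> 0" and "y \<noteq> 0"
  shows "N (inverse x - inverse y) = N (x - y) / (N x * N y)"
proof -
  have "inverse x - inverse y = (y - x) / (x * y)"
    using assms by (simp add: field_simps)
  then show ?thesis
    by (simp add: N_divide N_mult N_diff_commute)
qed

lemma N_diff_inverse_le:
  assumes "1 < r" and "r \<le> N x" and "r \<le> N y"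
  shows "N (inverse x - inverse y) \<le> 1 / r" and "r * N (inverse x - inverse y) \<le> N (x - y)"
proof -
  have "0 < N x" "0 < N y" "x \<noteq> 0" "y \<noteq> 0"
    using assms by auto
  have "N x \<le> N x * N y / r" and "N y \<le> N x * N y / r"
    using assms \<open>0 < N x\<close> \<open>0 < N y\<close> by (simp_all add: field_simps mult_left_mono)
  then have "N (x - y) \<le> N x * N y / r"
    using N_diff_le[of x y] by simp
  then show "N (inverse x - inverse y) \<le> 1 / r"
    unfolding N_diff_inverse[OF \<open>x \<noteq> 0\<close> \<open>y \<noteq> 0\<close>] using \<open>0 < N x\<close> \<open>0 < N y\<close> \<open>1 < r\<close>
    by (simp add: field_simps)
  have "r * 1 \<le> N x * N y"
    using assms by (intro mult_mono) auto
  then have "r * N (x - y) \<le> N x * N y * N (x - y)"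
    by (intro mult_right_mono) (simp_all add: N_nonneg)
  then show "r * N (inverse x - inverse y) \<le> N (x - y)"
    unfolding N_diff_inverse[OF \<open>x \<noteq> 0\<close> \<open>y \<noteq> 0\<close>] using \<open>0 < N x\<close> \<open>0 < N y\<close>
    by (simp add: field_simps)
qed

text \<open>The distance between the \<open>j\<close>-th complete quotients is at most 1 and gets multiplied by at
  least \<open>r\<close> when \<open>j\<close> increases, so it vanishes.\<close>

lemma complete_quotients_unique:
  fixes x y c :: "nat \<Rightarrow> 'a"
  assumes "r > 1"
    and x: "\<And>j. x j = c j + inverse (x (Suc j))" and x_ge: "\<And>j. N (x (Suc j)) \<ge> r"
    and y: "\<And>j. y j = c j + inverse (y (Suc j))" and y_ge: "\<And>j. N (y (Suc j)) \<ge> r"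
  shows "x 0 = y 0"
proof -
  define d where "d j = N (x j - y j)" for j
  have eq: "x j - y j = inverse (x (Suc j)) - inverse (y (Suc j))" for j
    using x[of j] y[of j] by simp
  have d_le: "d j \<le> 1 / r" for j
    unfolding d_def eq by (rule N_diff_inverse_le(1)[OF \<open>r > 1\<close> x_ge y_ge])
  have d_step: "r * d j \<le> d (Suc j)" for j
    unfolding d_def eq[of j] by (rule N_diff_inverse_le(2)[OF \<open>r > 1\<close> x_ge y_ge])
  have "d 0 * r ^ n \<le> d n" for n
  proof (induction n)
    case (Suc n)
    then have "d 0 * r ^ Suc n \<le> r * d n"
      using \<open>r > 1\<close> by (simp add: ac_simps)
    then show ?case
      using d_step[of n] by simp
  qed simp
  moreover have "d n \<le> 1" for n
    using d_le[of n] \<open>r > 1\<close> by (simp add: divide_le_eq order_trans)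
  ultimately have "d 0 * r ^ n \<le> 1" for n
    by (rule order_trans)
  then have "d 0 \<le> (1 / r) ^ n" for n
    using \<open>r > 1\<close> by (simp add: power_one_over pos_le_divide_eq)
  then have "d 0 \<le> 0"
    using LIMSEQ_power_zero[of "1 / r"] \<open>r > 1\<close> by (intro LIMSEQ_le_const) auto
  then show ?thesis
    using N_nonneg[of "x 0 - y 0"] unfolding d_def by simp
qed

end

section \<open>The p-adic absolute value\<close>

locale padic =
  fixes p :: nat and N :: "'a::field_char_0 \<Rightarrow> real"
  assumes prime_p: "prime p" and odd_p: "odd p" and padic_field: "padic_field p N"

sublocale padic \<subseteq> nonarch_abs N
  using padic_field unfolding padic_field_def by unfold_locales blast+

context padic
begin

lemma p_ge_2: "p \<ge> 2"
  using prime_p by (rule prime_ge_2_nat)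

lemma N_of_rat: "N (of_rat q) = padic_abs_rat p q"
  using padic_field unfolding padic_field_def by blast

lemma rat_dense: "e > 0 \<Longrightarrow> \<exists>q. N (x - of_rat q) < e"
  using padic_field unfolding padic_field_def by blast

lemma N_of_int: "z \<noteq> 0 \<Longrightarrow> N (of_int z) = 1 / real p ^ multiplicity (int p) z"
  using N_of_rat[of "of_int z"] p_ge_2
  by (simp add: padic_abs_rat_def padic_val_rat_def powr_minus powr_realpow divide_inverse)

lemma N_of_int_le_1: "N (of_int z) \<le> 1"
  using N_of_int[of z] p_ge_2 by (cases "z = 0") (simp_all add: divide_le_eq_1)

lemma N_of_int_eq_1: "\<not> int p dvd z \<Longrightarrow> N (of_int z) = 1"
  using N_of_int[of z] by (auto simp: not_dvd_imp_multiplicity_0)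

lemma N_of_nat_p: "N (of_nat p) = 1 / real p"
proof -
  have "multiplicity (int p) (int p) = 1"
    using prime_p by (intro multiplicity_self) (auto simp: prime_int_iff)
  then show ?thesis
    using N_of_int[of "int p"] p_ge_2 by simp
qed

lemma N_of_int_dvd: "int p dvd z \<Longrightarrow> N (of_int z) \<le> 1 / real p"
  using N_of_int_le_1 p_ge_2 by (auto simp: N_mult N_of_nat_p divide_le_eq)

lemma N_p_power: "N (of_nat p ^ n) = 1 / real p ^ n"
  by (simp add: N_power N_of_nat_p power_one_over)

lemma N_p_power_int: "N (of_nat p powi i) = real p powi (- i)"
  by (simp add: N_power_int N_of_nat_p power_int_minus inverse_eq_divide power_int_divide_distrib)

lemma N_le_p_power: "\<exists>R. N x \<le> real p ^ R"
proof -
  obtain q where q: "N (x - of_rat q) < 1"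
    using rat_dense[of 1] by auto
  obtain u v where uv: "quotient_of q = (u, v)"
    by (cases "quotient_of q") auto
  then have "v > 0" and q_eq: "(of_rat q :: 'a) = of_int u / of_int v"
    using quotient_of_denom_pos quotient_of_div[OF uv] by (auto simp: of_rat_divide)
  define R where "R = multiplicity (int p) v"
  have "N (of_rat q) = N (of_int u) * real p ^ R"
    unfolding q_eq R_def using \<open>v > 0\<close> by (simp add: N_divide N_of_int)
  also have "\<dots> \<le> real p ^ R"
    using N_of_int_le_1[of u] by (simp add: mult_left_le_one_le N_nonneg)
  finally have "N (of_rat q) \<le> real p ^ R" .
  moreover have "N x \<le> max (N (x - of_rat q)) (N (of_rat q))"
    using N_add_le[of "x - of_rat q" "of_rat q"] by simp
  moreover have "1 \<le> real p ^ R"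
    using p_ge_2 by simp
  ultimately show ?thesis
    using q by (intro exI[of _ R]) linarith
qed

section \<open>Browkin digits\<close>

lemma browkin_digits_iff: "d \<in> browkin_digits p \<longleftrightarrow> 2 * \<bar>d\<bar> < int p"
proof -
  obtain m where "int p = 2 * m + 1"
    using odd_p by (auto elim!: oddE)
  then have "(int p - 1) div 2 = m"
    by simp
  then show ?thesis
    unfolding browkin_digits_def using \<open>int p = 2 * m + 1\<close> by (auto simp: abs_if)
qed

lemma browkin_digit_residue: "\<exists>d \<in> browkin_digits p. int p dvd z - d"
proof -
  obtain m where p: "int p = 2 * m + 1"
    using odd_p by (auto elim!: oddE)
  define d where "d = (z + m) mod int p - m"
  have "0 \<le> (z + m) mod int p" "(z + m) mod int p < int p"
    using p_ge_2 by simp_all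
  then have "d \<in> browkin_digits p"
    unfolding browkin_digits_iff d_def using p by (auto simp: abs_if)
  moreover have "z - d = int p * ((z + m) div int p)"
    unfolding d_def by (simp add: minus_mod_eq_mult_div [symmetric])
  ultimately show ?thesis
    by (metis dvd_triv_left)
qed

lemma rat_residue:
  assumes "N (of_rat q) \<le> 1"
  shows "\<exists>z. N (of_rat q - of_int z) \<le> 1 / real p"
proof -
  obtain u v where uv: "quotient_of q = (u, v)"
    by (cases "quotient_of q") auto
  then have "v > 0" and "coprime u v" and q_eq: "(of_rat q :: 'a) = of_int u / of_int v"
    using quotient_of_denom_pos quotient_of_coprime quotient_of_div[OF uv] by (auto simp: of_rat_divide)
  have "\<not> int p dvd v"
  proof
    assume "int p dvd v"
    then have "\<not> int p dvd u"
      using \<open>coprime u v\<close> p_ge_2 coprime_common_divisor[of u v "int p"] by auto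
    then have "N (of_rat q) = 1 / N (of_int v)"
      unfolding q_eq by (simp add: N_divide N_of_int_eq_1)
    also have "\<dots> \<ge> real p"
      using N_of_int_dvd[OF \<open>int p dvd v\<close>] \<open>v > 0\<close> p_ge_2 by (simp add: N_pos_iff field_simps)
    finally show False
      using assms p_ge_2 by simp
  qed
  moreover have "prime (int p)"
    using prime_p by simp
  ultimately have "coprime v (int p)"
    using prime_imp_coprime[of "int p" v] by (simp add: coprime_commute)
  then obtain w z where wz: "w * v + z * int p = 1"
    using bezout_int[of v "int p"] by auto
  have "u - u * w * v = u * (1 - w * v)"
    by (simp add: algebra_simps)
  also have "1 - w * v = int p * z"
    using wz by (simp add: algebra_simps)
  finally have "int p dvd u - u * w * v"
    by simp
  have "(of_rat q - of_int (u * w) :: 'a) = of_int (u - u * w * v) / of_int v"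
    unfolding q_eq using \<open>v > 0\<close> by (simp add: field_simps)
  then have "N (of_rat q - of_int (u * w)) = N (of_int (u - u * w * v) :: 'a)"
    using \<open>\<not> int p dvd v\<close> by (simp add: N_divide N_of_int_eq_1)
  also have "\<dots> \<le> 1 / real p"
    using \<open>int p dvd u - u * w * v\<close> by (rule N_of_int_dvd)
  finally show ?thesis ..
qed

lemma browkin_digit_approx:
  assumes "N y \<le> 1"
  shows "\<exists>d \<in> browkin_digits p. N (y - of_int d) \<le> 1 / real p"
proof -
  obtain q where q: "N (y - of_rat q) < 1 / real p"
    using rat_dense[of "1 / real p"] p_ge_2 by auto
  have "N (of_rat q) \<le> max (N y) (N (y - of_rat q))"
    using N_diff_le[of y "y - of_rat q"] by simp
  also have "\<dots> \<le> 1"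
  proof -
    have "1 / real p \<le> 1"
      using p_ge_2 by simp
    then show ?thesis
      using assms q by simp
  qed
  finally obtain z where z: "N (of_rat q - of_int z) \<le> 1 / real p"
    using rat_residue by blast
  obtain d where d: "d \<in> browkin_digits p" "int p dvd z - d"
    using browkin_digit_residue by blast
  have "N ((of_rat q - of_int z) + of_int (z - d)) \<le> 1 / real p"
    using N_add_le[of "of_rat q - of_int z" "of_int (z - d)"] z N_of_int_dvd[OF d(2)] by simp
  moreover have "y - of_int d = (y - of_rat q) + ((of_rat q - of_int z) + of_int (z - d))"
    by simp
  ultimately have "N (y - of_int d) \<le> 1 / real p"
    using N_add_le[of "y - of_rat q" "(of_rat q - of_int z) + of_int (z - d)"] q by simp
  then show ?thesis
    using d(1) by blast
qed

end

section \<open>p-adic expansions\<close>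

lemma sum_int_shift: "sum g {r..r + int n} = (\<Sum>l\<le>n. g (r + int l))"
  by (rule sum.reindex_bij_witness[of _ "\<lambda>l. r + int l" "\<lambda>i. nat (i - r)"]) auto

lemma sum_int_extend:
  assumes "\<And>i. i < r \<Longrightarrow> g i = 0" and "r0 \<le> r"
  shows "sum g {r0..n} = sum g {r..n :: int}"
  using assms by (intro sum.mono_neutral_right) auto

lemma obtain_least_int:
  fixes P :: "int \<Rightarrow> bool"
  assumes "P i" and "\<And>i. i < r \<Longrightarrow> \<not> P i"
  obtains j where "P j" and "\<And>i. i < j \<Longrightarrow> \<not> P i"
proof -
  have "r \<le> i"
    using assms by force
  then have ex: "\<exists>n. P (r + int n)"
    using assms(1) by (intro exI[of _ "nat (i - r)"]) simp
  define j where "j = r + int (LEAST n. P (r + int n))"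
  have "P j"
    unfolding j_def using LeastI_ex[OF ex] .
  moreover have "\<not> P i" if "i < j" for i
  proof (cases "i < r")
    case False
    then have "nat (i - r) < (LEAST n. P (r + int n))"
      using that unfolding j_def by auto
    then show ?thesis
      using not_less_Least False by fastforce
  qed (use assms in auto)
  ultimately show ?thesis
    using that by blast
qed

lemma balanced_digits_sum_bound:
  fixes q :: int and d :: "nat \<Rightarrow> int"
  assumes "\<And>l. 2 * \<bar>d l\<bar> < q"
  shows "2 * \<bar>\<Sum>l\<le>e. d l * q ^ l\<bar> < q ^ (e + 1)"
proof -
  have "q > 0"
    using assms[of 0] by linarith
  have "\<bar>\<Sum>l\<le>e. d l * q ^ l\<bar> \<le> (\<Sum>l\<le>e. \<bar>d l * q ^ l\<bar>)"
    by (rule sum_abs)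
  then have "2 * \<bar>\<Sum>l\<le>e. d l * q ^ l\<bar> \<le> (\<Sum>l\<le>e. 2 * \<bar>d l\<bar> * q ^ l)"
    using \<open>q > 0\<close> by (simp add: sum_distrib_left[symmetric] abs_mult mult.assoc)
  also have "\<dots> \<le> (\<Sum>l\<le>e. (q - 1) * q ^ l)"
    using assms \<open>q > 0\<close> by (intro sum_mono mult_right_mono) auto
  also have "\<dots> = (q - 1) * (\<Sum>l<Suc e. q ^ l)"
    by (simp add: sum_distrib_left lessThan_Suc_atMost)
  also have "\<dots> = q ^ (e + 1) - 1"
    by (metis Suc_eq_plus1 power_diff_1_eq)
  finally show ?thesis
    by simp
qed

lemma not_dvd_digits_sum:
  fixes q :: int and d :: "nat \<Rightarrow> int"
  assumes "\<not> q dvd d 0"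
  shows "\<not> q dvd (\<Sum>l\<le>e. d l * q ^ l)"
proof -
  have "(\<Sum>l\<le>e. d l * q ^ l) = d 0 + (\<Sum>l\<in>{1..e}. d l * q ^ l)"
    by (simp add: atMost_atLeast0 sum.atLeast_Suc_atMost)
  moreover have "q dvd (\<Sum>l\<in>{1..e}. d l * q ^ l)"
    by (auto intro!: dvd_sum dvd_mult)
  ultimately show ?thesis
    using assms by (simp add: dvd_add_left_iff)
qed

context padic
begin

abbreviation digit_sum :: "(int \<Rightarrow> int) \<Rightarrow> int set \<Rightarrow> 'a" where
  "digit_sum a I \<equiv> \<Sum>i\<in>I. of_int (a i) * of_nat p powi i"

lemma digit_sum_shift:
  "digit_sum a {- int e..- int e + int n} = (\<Sum>l\<le>n. of_int (a (int l - int e)) * of_nat p ^ l) / of_nat p ^ e"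
proof -
  have "(of_nat p powi (int l - int e) :: 'a) = of_nat p ^ l / of_nat p ^ e" for l
    using p_ge_2 by (simp add: power_int_diff)
  then show ?thesis
    unfolding sum_int_shift by (simp add: sum_divide_distrib)
qed

lemma N_digit_sum_le:
  assumes "\<And>i. i \<in> I \<Longrightarrow> j \<le> i"
  shows "N (digit_sum a I) \<le> real p powi (- j)"
proof (rule N_sum_le)
  fix i
  assume "i \<in> I"
  have "N (of_int (a i) * of_nat p powi i) \<le> real p powi (- i)"
    using N_of_int_le_1[of "a i"] p_ge_2 by (simp add: N_mult N_p_power_int mult_left_le_one_le N_nonneg)
  also have "\<dots> \<le> real p powi (- j)"
    using assms[OF \<open>i \<in> I\<close>] p_ge_2 by (intro power_int_increasing) auto
  finally show "N (of_int (a i) * of_nat p powi i) \<le> real p powi (- j)" .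
qed (use p_ge_2 in simp)

lemma N_digit_sum_eq:
  assumes "\<not> int p dvd a j" and "j \<le> n"
  shows "N (digit_sum a {j..n}) = real p powi (- j)"
proof -
  have "{j..n} = insert j {j + 1..n}"
    using assms(2) by auto
  then have "digit_sum a {j..n} = of_int (a j) * of_nat p powi j + digit_sum a {j + 1..n}"
    by simp
  moreover have "N (of_int (a j) * of_nat p powi j) = real p powi (- j)"
    using assms(1) by (simp add: N_mult N_of_int_eq_1 N_p_power_int)
  moreover have "N (digit_sum a {j + 1..n}) < real p powi (- j)"
  proof -
    have "N (digit_sum a {j + 1..n}) \<le> real p powi (- (j + 1))"
      by (rule N_digit_sum_le) auto
    also have "\<dots> < real p powi (- j)"
      using p_ge_2 by (intro power_int_strict_increasing) auto
    finally show ?thesis .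
  qed
  ultimately show ?thesis
    by (simp add: N_add_eq_left)
qed

lemma padic_expansion_tendsto:
  assumes "is_padic_expansion p N x a" and "\<And>i. i < r \<Longrightarrow> a i = 0"
  shows "(\<lambda>n. N (digit_sum a {r..int n} - x)) \<longlonglongrightarrow> 0"
proof -
  obtain r' where r': "\<forall>i<r'. a i = 0"
    and lim: "(\<lambda>n. N (digit_sum a {r'..int n} - x)) \<longlonglongrightarrow> 0"
    using assms(1) unfolding is_padic_expansion_def by blast
  have "digit_sum a {r..int n} = digit_sum a {r'..int n}" for n
  proof -
    have "digit_sum a {min r r'..int n} = digit_sum a {r..int n}"
      by (rule sum_int_extend) (use assms(2) in auto)
    moreover have "digit_sum a {min r r'..int n} = digit_sum a {r'..int n}"
      by (rule sum_int_extend) (use r' in auto)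
    ultimately show ?thesis
      by simp
  qed
  then show ?thesis
    using lim by simp
qed

lemma N_digit_sum_diff:
  assumes digits: "\<And>i. a i \<in> browkin_digits p" "\<And>i. a' i \<in> browkin_digits p"
    and "a j \<noteq> a' j" and below_j: "\<And>i. i < j \<Longrightarrow> a i = a' i" and "r \<le> j" and "j \<le> n"
  shows "N (digit_sum a {r..n} - digit_sum a' {r..n}) = real p powi (- j)"
proof -
  define \<delta> where "\<delta> i = a i - a' i" for i
  have "2 * \<bar>a j\<bar> < int p" "2 * \<bar>a' j\<bar> < int p"
    using digits unfolding browkin_digits_iff by blast+
  then have "\<bar>\<delta> j\<bar> < int p"
    using abs_triangle_ineq4[of "a j" "a' j"] unfolding \<delta>_def by linarith
  then have "\<not> int p dvd \<delta> j"
    using \<open>a j \<noteq> a' j\<close> dvd_imp_le_int[of "\<delta> j" "int p"] unfolding \<delta>_def by force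
  have "digit_sum a {r..n} - digit_sum a' {r..n} = digit_sum \<delta> {r..n}"
    by (simp add: \<delta>_def sum_subtractf[symmetric] left_diff_distrib)
  also have "\<dots> = digit_sum \<delta> {j..n}"
    using below_j \<open>r \<le> j\<close> by (intro sum_int_extend) (auto simp: \<delta>_def)
  finally show ?thesis
    using N_digit_sum_eq[of \<delta> j n] \<open>\<not> int p dvd \<delta> j\<close> \<open>j \<le> n\<close> by simp
qed

lemma padic_expansion_unique:
  assumes a: "is_padic_expansion p N x a" and a': "is_padic_expansion p N x a'"
  shows "a = a'"
proof (rule ccontr)
  assume "a \<noteq> a'"
  obtain r r' where r: "\<forall>i<r. a i = 0" and r': "\<forall>i<r'. a' i = 0"
    using a a' unfolding is_padic_expansion_def by blast
  define r0 where "r0 = min r r'"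
  have below_r0: "a i = 0" "a' i = 0" if "i < r0" for i
    using r r' that by (auto simp: r0_def)
  obtain i where "a i \<noteq> a' i"
    using \<open>a \<noteq> a'\<close> by auto
  then obtain j where j: "a j \<noteq> a' j" and below_j: "\<And>i. i < j \<Longrightarrow> a i = a' i"
    using obtain_least_int[of "\<lambda>i. a i \<noteq> a' i" i r0] below_r0 by auto
  have "r0 \<le> j"
    using j below_r0 by (metis not_le)
  define S where "S b n = digit_sum b {r0..int n}" for b n
  have "eventually (\<lambda>n. N (S a n - S a' n) = real p powi (- j)) sequentially"
    using a a' j below_j \<open>r0 \<le> j\<close> unfolding S_def is_padic_expansion_def
    by (intro eventually_sequentiallyI[of "nat j"] N_digit_sum_diff) auto
  then have "(\<lambda>n. N (S a n - S a' n)) \<longlonglongrightarrow> real p powi (- j)"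
    by (rule tendsto_eventually)
  moreover have "(\<lambda>n. N (S a n - S a' n)) \<longlonglongrightarrow> 0"
  proof (rule tendsto_sandwich[of "\<lambda>_. 0" _ _ "\<lambda>n. max (N (S a n - x)) (N (S a' n - x))"])
    show "\<forall>\<^sub>F n in sequentially. N (S a n - S a' n) \<le> max (N (S a n - x)) (N (S a' n - x))"
      using N_diff_le[of "S a _ - x" "S a' _ - x"] by simp
    show "(\<lambda>n. max (N (S a n - x)) (N (S a' n - x))) \<longlonglongrightarrow> 0"
      using tendsto_max[OF padic_expansion_tendsto[OF a] padic_expansion_tendsto[OF a']] below_r0
      unfolding S_def by simp
  qed (simp_all add: N_nonneg)
  ultimately have "real p powi (- j) = 0"
    by (rule LIMSEQ_unique)
  then show False
    using p_ge_2 by simp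
qed

lemma unit_ball_digits:
  assumes "N y \<le> 1"
  obtains d :: "nat \<Rightarrow> int" where "\<And>l. d l \<in> browkin_digits p"
    and "\<And>n. N (y - (\<Sum>l<n. of_int (d l) * of_nat p ^ l)) \<le> 1 / real p ^ n"
proof -
  have "\<forall>z. \<exists>d. N z \<le> 1 \<longrightarrow> d \<in> browkin_digits p \<and> N (z - of_int d) \<le> 1 / real p"
    using browkin_digit_approx by blast
  then obtain dig where dig: "\<And>z. N z \<le> 1 \<Longrightarrow> dig z \<in> browkin_digits p \<and> N (z - of_int (dig z)) \<le> 1 / real p"
    by metis
  define rem where "rem n = ((\<lambda>z. (z - of_int (dig z)) / of_nat p) ^^ n) y" for n
  have rem_Suc: "rem (Suc n) = (rem n - of_int (dig (rem n))) / of_nat p" for n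
    by (simp add: rem_def)
  have rem_le: "N (rem n) \<le> 1" for n
  proof (induction n)
    case (Suc n)
    then show ?case
      using dig[OF Suc] p_ge_2 by (simp add: rem_Suc N_divide N_of_nat_p field_simps)
  qed (simp add: rem_def assms)
  have sum_rem: "y = (\<Sum>l<n. of_int (dig (rem l)) * of_nat p ^ l) + of_nat p ^ n * rem n" for n
  proof (induction n)
    case (Suc n)
    have "(\<Sum>l<Suc n. of_int (dig (rem l)) * of_nat p ^ l) + of_nat p ^ Suc n * rem (Suc n)
        = (\<Sum>l<n. of_int (dig (rem l)) * of_nat p ^ l)
          + of_nat p ^ n * (of_int (dig (rem n)) + of_nat p * rem (Suc n))"
      by (simp add: algebra_simps)
    also have "of_int (dig (rem n)) + of_nat p * rem (Suc n) = rem n"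
      using p_ge_2 by (simp add: rem_Suc)
    finally show ?case
      using Suc.IH by simp
  qed (simp add: rem_def)
  show thesis
  proof (rule that)
    show "dig (rem l) \<in> browkin_digits p" for l
      using dig[OF rem_le] by blast
    show "N (y - (\<Sum>l<n. of_int (dig (rem l)) * of_nat p ^ l)) \<le> 1 / real p ^ n" for n
      using rem_le[of n] p_ge_2 sum_rem[of n]
      by (simp add: N_mult N_p_power divide_right_mono)
  qed
qed

lemma N_digit_sum_scaled_sub_le:
  assumes approx: "\<And>n. N (y - (\<Sum>l<n. of_int (d l) * of_nat p ^ l)) \<le> 1 / real p ^ n"
    and a: "\<And>i. a i = (if - int R \<le> i then d (nat (i + int R)) else 0)"
  shows "N (digit_sum a {- int R..int n} - y / of_nat p ^ R) \<le> 1 / real p ^ Suc n"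
proof -
  define S where "S = (\<Sum>l<Suc (n + R). of_int (d l) * of_nat p ^ l :: 'a)"
  have "digit_sum a {- int R..int n} = digit_sum a {- int R..- int R + int (n + R)}"
    by simp
  also have "\<dots> = (\<Sum>l\<le>n + R. of_int (a (int l - int R)) * of_nat p ^ l) / of_nat p ^ R"
    by (rule digit_sum_shift)
  also have "\<dots> = S / of_nat p ^ R"
    by (simp add: S_def a lessThan_Suc_atMost)
  finally have "N (digit_sum a {- int R..int n} - y / of_nat p ^ R) = N (y - S) * real p ^ R"
    by (simp add: diff_divide_distrib[symmetric] N_divide N_p_power N_diff_commute)
  also have "\<dots> \<le> 1 / real p ^ Suc (n + R) * real p ^ R"
    using approx[of "Suc (n + R)"] unfolding S_def by (intro mult_right_mono) auto
  also have "\<dots> = 1 / real p ^ Suc n"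
    using p_ge_2 by (simp add: power_add)
  finally show ?thesis .
qed

lemma padic_expansion_exists: "\<exists>a. is_padic_expansion p N x a"
proof -
  obtain R where R: "N x \<le> real p ^ R"
    using N_le_p_power by blast
  have "N (x * of_nat p ^ R) = N x / real p ^ R"
    by (simp add: N_mult N_p_power)
  also have "\<dots> \<le> 1"
    using R p_ge_2 by simp
  finally obtain d where d: "\<And>l. d l \<in> browkin_digits p"
    and approx: "\<And>n. N (x * of_nat p ^ R - (\<Sum>l<n. of_int (d l) * of_nat p ^ l)) \<le> 1 / real p ^ n"
    by (rule unit_ball_digits) auto
  define a where "a i = (if - int R \<le> i then d (nat (i + int R)) else 0)" for i
  have bound: "N (digit_sum a {- int R..int n} - x) \<le> 1 / real p ^ Suc n" for n
    using N_digit_sum_scaled_sub_le[OF approx a_def] p_ge_2 by simp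
  have "(\<lambda>n. 1 / real p ^ n) \<longlonglongrightarrow> 0"
    using LIMSEQ_inverse_realpow_zero[of "real p"] p_ge_2 by (simp add: inverse_eq_divide)
  then have "(\<lambda>n. 1 / real p ^ Suc n) \<longlonglongrightarrow> 0"
    by (rule LIMSEQ_Suc)
  then have lim: "(\<lambda>n. N (digit_sum a {- int R..int n} - x)) \<longlonglongrightarrow> 0"
  proof (rule tendsto_sandwich[of "\<lambda>_. 0", rotated 3])
    show "\<forall>\<^sub>F n in sequentially. 0 \<le> N (digit_sum a {- int R..int n} - x)"
      by (simp add: N_nonneg)
    show "\<forall>\<^sub>F n in sequentially. N (digit_sum a {- int R..int n} - x) \<le> 1 / real p ^ Suc n"
      using bound by (intro always_eventually allI)
  qed simp
  have "is_padic_expansion p N x a"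
    unfolding is_padic_expansion_def
  proof (intro conjI allI exI[of _ "- int R"])
    show "a i \<in> browkin_digits p" for i
      using d p_ge_2 by (simp add: a_def browkin_digits_iff)
    show "i < - int R \<longrightarrow> a i = 0" for i
      by (simp add: a_def)
  qed (fact lim)
  then show ?thesis
    by blast
qed

lemma digit_sum_frac:
  assumes digits: "\<And>i. a i \<in> browkin_digits p" and "a (- int e) \<noteq> 0"
  shows "\<exists>c. \<not> int p dvd c \<and> 2 * \<bar>c\<bar> < int p ^ (e + 1) \<and> digit_sum a {- int e..0} = of_int c / of_nat p ^ e"
proof (intro exI conjI)
  define c where "c = (\<Sum>l\<le>e. a (int l - int e) * int p ^ l)"
  have "2 * \<bar>a (int l - int e)\<bar> < int p" for l
    using digits unfolding browkin_digits_iff by blast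
  then show "2 * \<bar>c\<bar> < int p ^ (e + 1)"
    unfolding c_def by (rule balanced_digits_sum_bound)
  have "\<not> int p dvd a (- int e)"
    using digits[of "- int e"] \<open>a (- int e) \<noteq> 0\<close> dvd_imp_le_int[of "a (- int e)" "int p"]
    unfolding browkin_digits_iff by force
  then show "\<not> int p dvd c"
    unfolding c_def by (intro not_dvd_digits_sum) simp
  show "digit_sum a {- int e..0} = of_int c / of_nat p ^ e"
    using digit_sum_shift[of a e e] by (simp add: c_def)
qed

lemma browkin_s_expansion:
  obtains a r where "is_padic_expansion p N x a" and "\<And>i. i < r \<Longrightarrow> a i = 0" and "r \<le> 0"
    and "browkin_s p N x = digit_sum a {r..0}"
proof -
  obtain a where a: "is_padic_expansion p N x a"
    using padic_expansion_exists by blast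
  then obtain r where r: "\<forall>i<r. a i = 0"
    unfolding is_padic_expansion_def by blast
  define r0 where "r0 = min r 0"
  have below: "a i = 0" if "i < r0" for i
    using r that by (simp add: r0_def)
  have "browkin_s p N x = digit_sum a {i. i \<le> 0 \<and> a i \<noteq> 0}"
    unfolding browkin_s_def
  proof (rule the_equality)
    fix y
    assume "\<exists>a'. is_padic_expansion p N x a' \<and> y = digit_sum a' {i. i \<le> 0 \<and> a' i \<noteq> 0}"
    then obtain a' where "is_padic_expansion p N x a'" and y: "y = digit_sum a' {i. i \<le> 0 \<and> a' i \<noteq> 0}"
      by blast
    then show "y = digit_sum a {i. i \<le> 0 \<and> a i \<noteq> 0}"
      using padic_expansion_unique[OF a] by simp
  qed (use a in blast)
  also have "\<dots> = digit_sum a {r0..0}"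
    using below by (intro sum.mono_neutral_left) (auto simp: not_less[symmetric])
  finally have "browkin_s p N x = digit_sum a {r0..0}" .
  then show thesis
    by (intro that[OF a below]) (simp_all add: r0_def)
qed

lemma N_sub_browkin_s: "N (x - browkin_s p N x) \<le> 1 / real p"
proof -
  obtain a r where a: "is_padic_expansion p N x a" and below: "\<And>i. i < r \<Longrightarrow> a i = 0"
    and "r \<le> 0" and s: "browkin_s p N x = digit_sum a {r..0}"
    by (rule browkin_s_expansion[of x]) blast
  have "eventually (\<lambda>n. N (digit_sum a {r..int n} - x) < 1 / real p) sequentially"
    using padic_expansion_tendsto[OF a below] p_ge_2 by (intro order_tendstoD(2)) auto
  then obtain n where n: "N (digit_sum a {r..int n} - x) < 1 / real p"
    unfolding eventually_sequentially by blast
  have "{r..int n} = {r..0} \<union> {1..int n}"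
    using \<open>r \<le> 0\<close> by auto
  then have "digit_sum a {r..int n} = browkin_s p N x + digit_sum a {1..int n}"
    unfolding s by (subst sum.union_disjoint[symmetric]) auto
  then have "x - browkin_s p N x = digit_sum a {1..int n} - (digit_sum a {r..int n} - x)"
    by (simp add: algebra_simps)
  then have "N (x - browkin_s p N x) \<le> max (N (digit_sum a {1..int n})) (N (digit_sum a {r..int n} - x))"
    by (simp only: N_diff_le)
  moreover have "N (digit_sum a {1..int n}) \<le> 1 / real p"
    using N_digit_sum_le[of "{1..int n}" 1 a] by (simp add: power_int_minus inverse_eq_divide)
  ultimately show ?thesis
    using n by simp
qed

lemma N_browkin_s_eq:
  assumes "N x > 1"
  shows "N (browkin_s p N x) = N x"
proof -
  have "1 / real p < 1"
    using p_ge_2 by simp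
  then have "N (- (x - browkin_s p N x)) < N x"
    using N_sub_browkin_s[of x] assms by (simp only: N_minus)
  then show ?thesis
    using N_add_eq_left[of "- (x - browkin_s p N x)" x] by simp
qed

lemma browkin_s_lowest_digit:
  assumes "N x > 1"
  obtains a e where "\<And>i. a i \<in> browkin_digits p" and "e \<ge> 1" and "a (- int e) \<noteq> 0"
    and "browkin_s p N x = digit_sum a {- int e..0}"
proof -
  obtain a r where a: "is_padic_expansion p N x a" and below: "\<And>i. i < r \<Longrightarrow> a i = 0"
    and "r \<le> 0" and s: "browkin_s p N x = digit_sum a {r..0}"
    by (rule browkin_s_expansion[of x]) blast
  have N_s: "N (digit_sum a {r..0}) > 1"
    using N_browkin_s_eq[OF assms] assms s by simp
  have "\<exists>i. a i \<noteq> 0"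
  proof (rule ccontr)
    assume "\<nexists>i. a i \<noteq> 0"
    then show False
      using N_s by simp
  qed
  then obtain i where "a i \<noteq> 0" ..
  then obtain j where "a j \<noteq> 0" and below_j: "\<And>i. i < j \<Longrightarrow> a i = 0"
    using obtain_least_int[of "\<lambda>i. a i \<noteq> 0" i r] below by auto
  have "r \<le> j"
    using below \<open>a j \<noteq> 0\<close> by (meson not_le)
  have s_j: "digit_sum a {r..0} = digit_sum a {j..0}"
    using below_j \<open>r \<le> j\<close> by (intro sum_int_extend) auto
  have "j < 0"
  proof (rule ccontr)
    assume "\<not> j < 0"
    then have "digit_sum a {j..0} = 0 \<or> digit_sum a {j..0} = of_int (a 0)"
      by (cases "j = 0") auto
    then show False
      using N_s N_of_int_le_1[of "a 0"] s_j by auto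
  qed
  then have "j = - int (nat (- j))" and "nat (- j) \<ge> 1"
    by simp_all
  moreover have "a i \<in> browkin_digits p" for i
    using a unfolding is_padic_expansion_def by blast
  ultimately show thesis
    using that \<open>a j \<noteq> 0\<close> s s_j by metis
qed

lemma browkin_s_frac:
  assumes "N x > 1"
  obtains c e where "e \<ge> 1" and "\<not> int p dvd c" and "2 * \<bar>c\<bar> < int p ^ (e + 1)"
    and "browkin_s p N x = of_int c / of_nat p ^ e"
proof -
  obtain a e where "\<And>i. a i \<in> browkin_digits p" and "e \<ge> 1" and "a (- int e) \<noteq> 0"
    and "browkin_s p N x = digit_sum a {- int e..0}"
    using browkin_s_lowest_digit[OF assms] by blast
  then show thesis
    using that digit_sum_frac[of a e] by metis
qed

end

section \<open>Naive height of a root of an integer quadratic\<close>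

lemma map_poly_of_int_diff:
  "map_poly (of_int :: int \<Rightarrow> 'a::comm_ring_1) (P - Q) = map_poly of_int P - map_poly of_int Q"
  by (rule poly_eqI) (simp add: coeff_map_poly)

lemma map_poly_of_int_smult:
  "map_poly (of_int :: int \<Rightarrow> 'a::comm_ring_1) (smult c P) = smult (of_int c) (map_poly of_int P)"
  by (rule poly_eqI) (simp add: coeff_map_poly)

lemma map_poly_of_int_mult:
  "map_poly (of_int :: int \<Rightarrow> 'a::comm_ring_1) (P * Q) = map_poly of_int P * map_poly of_int Q"
  by (rule poly_eqI) (simp add: coeff_map_poly coeff_mult)

definition poly_height :: "int poly \<Rightarrow> real" where
  "poly_height P = real_of_int (Max (abs ` set (coeffs P))) / real_of_int (content P)"

lemma abs_coeff_le_Max: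
  fixes P :: "int poly"
  assumes "P \<noteq> 0"
  shows "\<bar>coeff P i\<bar> \<le> Max (abs ` set (coeffs P))"
proof (cases "coeff P i = 0")
  case True
  obtain z where "z \<in> set (coeffs P)"
    using assms by (meson ex_in_conv coeffs_eq_Nil set_empty)
  then have "\<bar>z\<bar> \<le> Max (abs ` set (coeffs P))"
    by (intro Max_ge) auto
  then show ?thesis
    using True abs_ge_zero[of z] by simp
next
  case False
  then have "coeff P i \<in> set (coeffs P)"
    using assms by (intro coeff_in_coeffs) (auto simp: le_degree)
  then show ?thesis
    by (intro Max_ge) auto
qed

lemma Max_abs_coeffs_attained:
  fixes P :: "int poly"
  assumes "P \<noteq> 0"
  obtains i where "Max (abs ` set (coeffs P)) = \<bar>coeff P i\<bar>"
proof -
  have "Max (abs ` set (coeffs P)) \<in> abs ` set (coeffs P)"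
    using assms by (intro Max_in) auto
  then show thesis
    using that by (auto simp: coeffs_def split: if_splits)
qed

lemma Max_abs_coeffs_smult:
  fixes P :: "int poly"
  assumes "c \<noteq> 0" and "P \<noteq> 0"
  shows "Max (abs ` set (coeffs (smult c P))) = \<bar>c\<bar> * Max (abs ` set (coeffs P))"
proof -
  have "abs ` set (coeffs (smult c P)) = (\<lambda>x. \<bar>c\<bar> * x) ` (abs ` set (coeffs P))"
    using assms by (simp add: coeffs_smult image_image abs_mult)
  moreover have "mono (\<lambda>x::int. \<bar>c\<bar> * x)"
    by (auto simp: mono_def mult_left_mono)
  ultimately show ?thesis
    using assms by (simp add: mono_Max_commute)
qed

lemma poly_height_smult:
  assumes "c \<noteq> 0" and "P \<noteq> 0"
  shows "poly_height (smult c P) = poly_height P"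
  using assms by (simp add: poly_height_def Max_abs_coeffs_smult)

lemma poly_height_le_Max:
  assumes "P \<noteq> 0"
  shows "poly_height P \<le> Max (abs ` set (coeffs P))"
proof -
  have "\<bar>content P\<bar> = content P" and "content P \<noteq> 0"
    using assms normalize_content[of P] by simp_all
  then have "content P \<ge> 1"
    by linarith
  moreover have "Max (abs ` set (coeffs P)) \<ge> 0"
    using abs_coeff_le_Max[OF assms, of 0] by linarith
  ultimately show ?thesis
    unfolding poly_height_def by (simp add: divide_le_eq mult_le_cancel_left1)
qed

lemma min_degree_root_polys_proportional:
  fixes \<alpha> :: "'a::field_char_0"
  assumes P: "P \<noteq> 0" "poly (map_poly of_int P) \<alpha> = 0"
    and Q: "poly (map_poly of_int Q) \<alpha> = 0" "degree Q = degree P"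
    and min: "\<And>R. R \<noteq> 0 \<Longrightarrow> poly (map_poly of_int R) \<alpha> = 0 \<Longrightarrow> degree P \<le> degree R"
  shows "smult (lead_coeff P) Q = smult (lead_coeff Q) P"
proof (rule ccontr)
  define R where "R = smult (lead_coeff P) Q - smult (lead_coeff Q) P"
  assume "smult (lead_coeff P) Q \<noteq> smult (lead_coeff Q) P"
  then have "R \<noteq> 0"
    by (simp add: R_def)
  moreover have "poly (map_poly of_int R) \<alpha> = 0"
    using P Q by (simp add: R_def map_poly_of_int_diff map_poly_of_int_smult)
  moreover have "degree R < degree P"
  proof -
    have "degree R \<le> degree P"
      unfolding R_def using Q(2) by (intro degree_diff_le) (auto intro: order_trans[OF degree_smult_le])
    moreover have "coeff R (degree P) = 0"
      using Q(2) by (simp add: R_def)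
    ultimately show ?thesis
      using \<open>R \<noteq> 0\<close> by (metis le_neq_implies_less leading_coeff_0_iff)
  qed
  ultimately show False
    using min by fastforce
qed

lemma naive_height_eq:
  fixes \<alpha> :: "'a::field_char_0"
  assumes P: "P \<noteq> 0" "poly (map_poly of_int P) \<alpha> = 0"
    and min: "\<And>Q. Q \<noteq> 0 \<Longrightarrow> poly (map_poly of_int Q) \<alpha> = 0 \<Longrightarrow> degree P \<le> degree Q"
  shows "naive_height \<alpha> = poly_height P"
  unfolding naive_height_def
proof (rule the_equality)
  fix h
  assume "\<exists>Q. Q \<noteq> 0 \<and> poly (map_poly of_int Q) \<alpha> = 0 \<and>
      (\<forall>R. R \<noteq> 0 \<and> poly (map_poly of_int R) \<alpha> = 0 \<longrightarrow> degree Q \<le> degree R) \<and>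
      h = real_of_int (Max (abs ` set (coeffs Q))) / real_of_int (content Q)"
  then obtain Q where Q: "Q \<noteq> 0" "poly (map_poly of_int Q) \<alpha> = 0" "degree Q \<le> degree P"
    and h: "h = poly_height Q"
    using P unfolding poly_height_def by blast
  then have "degree Q = degree P"
    using min by (simp add: order_antisym)
  then have "smult (lead_coeff P) Q = smult (lead_coeff Q) P"
    using P Q(2) min by (intro min_degree_root_polys_proportional)
  then show "h = poly_height P"
    using P(1) Q(1) h poly_height_smult by (metis leading_coeff_0_iff)
qed (use assms in \<open>auto simp: poly_height_def\<close>)

lemma obtain_min_degree_root_poly:
  fixes \<alpha> :: "'a::field_char_0"
  assumes "G \<noteq> 0" and "poly (map_poly of_int G) \<alpha> = 0"
  obtains P where "P \<noteq> 0" and "poly (map_poly of_int P) \<alpha> = 0"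
    and "\<And>Q. Q \<noteq> 0 \<Longrightarrow> poly (map_poly of_int Q) \<alpha> = 0 \<Longrightarrow> degree P \<le> degree Q"
  using ex_has_least_nat[of "\<lambda>P. P \<noteq> 0 \<and> poly (map_poly of_int P) \<alpha> = 0" G degree] assms by blast

lemma coprime_quadratic_root_bound:
  fixes u v g0 g1 g2 :: int
  assumes "coprime u v" and "v \<noteq> 0"
    and root: "g0 * v\<^sup>2 - g1 * u * v + g2 * u\<^sup>2 = 0" and "g0 \<noteq> 0 \<or> g1 \<noteq> 0 \<or> g2 \<noteq> 0"
  shows "\<bar>v\<bar> \<le> max \<bar>g1\<bar> \<bar>g2\<bar>"
proof -
  have "g2 * u\<^sup>2 = v * (g1 * u - g0 * v)"
    using root by (simp add: algebra_simps power2_eq_square)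
  then have "v dvd g2 * u\<^sup>2"
    by simp
  then have "v dvd g2"
    using \<open>coprime u v\<close> by (simp add: coprime_commute coprime_dvd_mult_left_iff)
  show ?thesis
  proof (cases "g2 = 0")
    case True
    then have "g0 * v = g1 * u"
      using root \<open>v \<noteq> 0\<close> by (simp add: power2_eq_square algebra_simps)
    then have "v dvd g1 * u"
      by (metis dvd_triv_right)
    moreover have "g1 \<noteq> 0"
      using True assms(4) \<open>v \<noteq> 0\<close> \<open>g0 * v = g1 * u\<close> by auto
    ultimately have "\<bar>v\<bar> \<le> \<bar>g1\<bar>"
      using \<open>coprime u v\<close> by (simp add: coprime_commute coprime_dvd_mult_left_iff dvd_imp_le_int)
    then show ?thesis
      by simp
  next
    case False
    then have "\<bar>v\<bar> \<le> \<bar>g2\<bar>"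
      using \<open>v dvd g2\<close> by (simp add: dvd_imp_le_int)
    then show ?thesis
      by simp
  qed
qed

lemma quadratic_at_rational_root:
  fixes \<alpha> :: "'a::field_char_0"
  assumes "degree G \<le> 2" and "poly (map_poly of_int G) \<alpha> = 0" and "of_int u + \<alpha> * of_int v = 0"
  shows "coeff G 0 * v\<^sup>2 - coeff G 1 * u * v + coeff G 2 * u\<^sup>2 = 0"
proof -
  have "poly (map_poly of_int G) \<alpha> = (\<Sum>i\<le>degree G. of_int (coeff G i) * \<alpha> ^ i)"
    by (simp add: poly_altdef degree_map_poly coeff_map_poly)
  also have "\<dots> = (\<Sum>i\<le>2. of_int (coeff G i) * \<alpha> ^ i)"
    using assms(1) by (intro sum.mono_neutral_left) (auto simp: coeff_eq_0)
  finally have "poly (map_poly of_int G) \<alpha>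
      = of_int (coeff G 0) + \<alpha> * (of_int (coeff G 1) + \<alpha> * of_int (coeff G 2))"
    by (simp add: numeral_2_eq_2 atMost_Suc algebra_simps power2_eq_square)
  then have "of_int v ^ 2 * (of_int (coeff G 0) + \<alpha> * (of_int (coeff G 1) + \<alpha> * of_int (coeff G 2))) = (0 :: 'a)"
    using assms(2) by simp
  moreover have "of_int u = - \<alpha> * of_int v"
    using assms(3) by (simp add: eq_neg_iff_add_eq_0)
  ultimately have "(of_int (coeff G 0 * v\<^sup>2 - coeff G 1 * u * v + coeff G 2 * u\<^sup>2) :: 'a) = 0"
    by (simp add: algebra_simps power2_eq_square)
  then show ?thesis
    by (simp only: of_int_eq_0_iff)
qed

lemma linear_poly_primitive:
  fixes P :: "int poly"
  assumes "degree P = 1"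
  obtains u v where "coprime u v" and "v \<noteq> 0" and "P = smult (content P) [:u, v:]"
    and "poly_height P = max \<bar>u\<bar> \<bar>v\<bar>"
proof -
  define Q where "Q = primitive_part P"
  define u v where "u = coeff Q 0" and "v = coeff Q 1"
  have "P \<noteq> 0" and "degree Q = 1"
    using assms by (auto simp: Q_def)
  then have "v \<noteq> 0"
    unfolding v_def using leading_coeff_0_iff[of Q] by auto
  have Q_eq: "Q = [:u, v:]"
  proof (rule poly_eqI)
    show "coeff Q n = coeff [:u, v:] n" for n
      using \<open>degree Q = 1\<close> by (cases n) (auto simp: u_def v_def coeff_pCons coeff_eq_0 split: nat.split)
  qed
  have "content Q = 1"
    using \<open>P \<noteq> 0\<close> by (simp add: Q_def)
  then have "coprime u v"
    using Q_eq \<open>v \<noteq> 0\<close> by (simp add: content_def gcd_eq_1_imp_coprime)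
  have "P = smult (content P) [:u, v:]"
    unfolding Q_eq[symmetric] by (simp add: Q_def)
  moreover have "poly_height P = poly_height [:u, v:]"
    using \<open>P \<noteq> 0\<close> \<open>v \<noteq> 0\<close> poly_height_smult[of "content P" "[:u, v:]"] calculation by simp
  moreover have "poly_height [:u, v:] = max \<bar>u\<bar> \<bar>v\<bar>"
    using \<open>content Q = 1\<close> \<open>v \<noteq> 0\<close> Q_eq by (simp add: poly_height_def)
  ultimately show thesis
    using that \<open>coprime u v\<close> \<open>v \<noteq> 0\<close> by simp
qed

lemma poly_height_linear_le:
  fixes \<alpha> :: "'a::field_char_0"
  assumes P: "degree P = 1" "poly (map_poly of_int P) \<alpha> = 0"
    and G: "G \<noteq> 0" "degree G \<le> 2" "poly (map_poly of_int G) \<alpha> = 0"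
  shows "poly_height P \<le> Max (abs ` set (coeffs G))"
proof -
  obtain u v where "coprime u v" and "v \<noteq> 0" and P_eq: "P = smult (content P) [:u, v:]"
    and height: "poly_height P = max \<bar>u\<bar> \<bar>v\<bar>"
    using linear_poly_primitive[OF P(1)] by blast
  have "poly (map_poly of_int (smult (content P) [:u, v:])) \<alpha> = 0"
    using P(2) by (subst (asm) P_eq)
  moreover have "content P \<noteq> 0"
    using P(1) by auto
  ultimately have "of_int (content P) * (of_int u + \<alpha> * of_int v) = (0 :: 'a)"
    by (simp add: map_poly_of_int_smult map_poly_pCons algebra_simps)
  with \<open>content P \<noteq> 0\<close> have "of_int u + \<alpha> * of_int v = 0"
    by simp
  then have root: "coeff G 0 * v\<^sup>2 - coeff G 1 * u * v + coeff G 2 * u\<^sup>2 = 0"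
    using G(2,3) by (rule quadratic_at_rational_root[rotated 2])
  have "coeff G (degree G) \<noteq> 0"
    using G(1) by simp
  moreover have "degree G = 0 \<or> degree G = 1 \<or> degree G = 2"
    using G(2) by auto
  ultimately have nz: "coeff G 0 \<noteq> 0 \<or> coeff G 1 \<noteq> 0 \<or> coeff G 2 \<noteq> 0"
    by metis
  have "\<bar>v\<bar> \<le> max \<bar>coeff G 1\<bar> \<bar>coeff G 2\<bar>"
    using \<open>coprime u v\<close> \<open>v \<noteq> 0\<close> root nz by (rule coprime_quadratic_root_bound)
  moreover have "\<bar>u\<bar> \<le> max \<bar>coeff G 1\<bar> \<bar>coeff G 0\<bar>"
  proof (cases "u = 0")
    case False
    have "coeff G 2 * u\<^sup>2 - coeff G 1 * v * u + coeff G 0 * v\<^sup>2 = 0"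
      using root by (simp add: algebra_simps)
    then show ?thesis
      using \<open>coprime u v\<close> False nz by (intro coprime_quadratic_root_bound) (auto simp: coprime_commute)
  qed simp
  ultimately show ?thesis
    using abs_coeff_le_Max[OF G(1), of 0] abs_coeff_le_Max[OF G(1), of 1] abs_coeff_le_Max[OF G(1), of 2]
    by (auto simp: height max_def split: if_splits)
qed

lemma naive_height_le_quadratic:
  fixes \<alpha> :: "'a::field_char_0"
  assumes G: "G \<noteq> 0" "degree G \<le> 2" "poly (map_poly of_int G) \<alpha> = 0"
  shows "naive_height \<alpha> \<le> Max (abs ` set (coeffs G))"
proof -
  obtain P where P: "P \<noteq> 0" "poly (map_poly of_int P) \<alpha> = 0"
    and min: "\<And>Q. Q \<noteq> 0 \<Longrightarrow> poly (map_poly of_int Q) \<alpha> = 0 \<Longrightarrow> degree P \<le> degree Q"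
    using obtain_min_degree_root_poly[OF G(1,3)] by blast
  have "naive_height \<alpha> = poly_height P"
    using P min by (rule naive_height_eq)
  moreover have "degree P \<noteq> 0"
  proof
    assume "degree P = 0"
    then obtain c where "P = [:c:]"
      by (rule degree_eq_zeroE)
    then show False
      using P by (simp add: map_poly_pCons)
  qed
  moreover have "degree P \<le> degree G"
    using min G by blast
  moreover have "poly_height P \<le> Max (abs ` set (coeffs G))" if "degree G = degree P"
  proof -
    have "smult (lead_coeff P) G = smult (lead_coeff G) P"
      using P G(3) that min by (rule min_degree_root_polys_proportional)
    then have "poly_height G = poly_height P"
      using P(1) G(1) poly_height_smult by (metis leading_coeff_0_iff)
    then show ?thesis
      using poly_height_le_Max[OF G(1)] by simp
  qed
  ultimately show ?thesis
    using poly_height_linear_le[OF _ P(2) G] G(2) by (cases "degree G = degree P") auto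
qed

lemma abs_coeff_linear_mult_le:
  fixes a0 a1 b0 b1 :: int
  assumes "\<bar>a0\<bar> \<le> A" "\<bar>a1\<bar> \<le> A" "\<bar>b0\<bar> \<le> B" "\<bar>b1\<bar> \<le> B"
  shows "\<bar>coeff ([:a0, a1:] * [:b0, b1:]) i\<bar> \<le> 2 * A * B"
proof -
  have prod: "\<bar>x * y\<bar> \<le> A * B" if "\<bar>x\<bar> \<le> A" "\<bar>y\<bar> \<le> B" for x y
    unfolding abs_mult using that by (intro mult_mono) auto
  have "0 \<le> A * B"
    using prod[OF assms(1,3)] by linarith
  have "\<bar>a0 * b1 + a1 * b0\<bar> \<le> 2 * A * B"
    using abs_triangle_ineq[of "a0 * b1" "a1 * b0"] prod[OF assms(1,4)] prod[OF assms(2,3)] by linarith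
  moreover have "\<bar>a0 * b0\<bar> \<le> 2 * A * B" "\<bar>a1 * b1\<bar> \<le> 2 * A * B"
    using prod[OF assms(1,3)] prod[OF assms(2,4)] \<open>0 \<le> A * B\<close> by linarith+
  moreover have "[:a0, a1:] * [:b0, b1:] = [:a0 * b0, a0 * b1 + a1 * b0, a1 * b1:]"
    by (simp add: algebra_simps)
  ultimately show ?thesis
    using \<open>0 \<le> A * B\<close> by (simp only:) (simp add: coeff_pCons split: nat.split)
qed

section \<open>Convergents\<close>

(* Numerators of the convergents, indexed like browkin_B: browkin_A b (i + 2) = A_i. *)
fun browkin_A :: "(nat \<Rightarrow> 'a::field) \<Rightarrow> nat \<Rightarrow> 'a" where
  "browkin_A b 0 = 0"
| "browkin_A b (Suc 0) = 1"
| "browkin_A b (Suc (Suc n)) = b n * browkin_A b (Suc n) + browkin_A b n"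

lemma browkin_A_B_det: "browkin_A b (Suc n) * browkin_B b n - browkin_A b n * browkin_B b (Suc n) = (- 1) ^ n"
proof (induction n)
  case (Suc n)
  have "browkin_A b (Suc (Suc n)) * browkin_B b (Suc n) - browkin_A b (Suc n) * browkin_B b (Suc (Suc n))
      = - (browkin_A b (Suc n) * browkin_B b n - browkin_A b n * browkin_B b (Suc n))"
    by (simp add: algebra_simps)
  then show ?case
    using Suc.IH by simp
qed simp

lemma complete_quotient_mult_error:
  fixes q b :: "nat \<Rightarrow> 'a::field"
  assumes "\<And>n. (q n - b n) * q (Suc n) = 1"
  shows "q n * (q 0 * browkin_B b (Suc n) - browkin_A b (Suc n)) = - (q 0 * browkin_B b n - browkin_A b n)"
proof -
  define D where "D j = q 0 * browkin_B b j - browkin_A b j" for j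
  have "q n * D (Suc n) = - D n"
  proof (induction n)
    case (Suc n)
    have "D (Suc (Suc n)) = b n * D (Suc n) + D n"
      by (simp add: D_def algebra_simps)
    then have "q (Suc n) * D (Suc (Suc n)) = q (Suc n) * (b n * D (Suc n) - q n * D (Suc n))"
      using Suc.IH by simp
    then have "q (Suc n) * D (Suc (Suc n)) = - ((q n - b n) * q (Suc n)) * D (Suc n)"
      by (simp add: algebra_simps)
    then show ?case
      using assms[of n] by simp
  qed (simp add: D_def)
  then show ?thesis
    unfolding D_def .
qed

fun cum_exp :: "(nat \<Rightarrow> nat) \<Rightarrow> nat \<Rightarrow> nat" where
  "cum_exp e 0 = 0"
| "cum_exp e (Suc 0) = 0"
| "cum_exp e (Suc (Suc n)) = cum_exp e (Suc n) + e n"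

lemma cum_exp_mono: "m \<le> n \<Longrightarrow> cum_exp e m \<le> cum_exp e n"
proof (induction n)
  case (Suc n)
  have "cum_exp e n \<le> cum_exp e (Suc n)"
    by (cases n) simp_all
  then show ?case
    using Suc by (auto simp: le_Suc_eq)
qed simp

fun cleared_rec :: "nat \<Rightarrow> (nat \<Rightarrow> int) \<Rightarrow> (nat \<Rightarrow> nat) \<Rightarrow> int \<Rightarrow> int \<Rightarrow> nat \<Rightarrow> int" where
  "cleared_rec q c e x0 x1 0 = x0"
| "cleared_rec q c e x0 x1 (Suc 0) = x1"
| "cleared_rec q c e x0 x1 (Suc (Suc n)) =
     c n * cleared_rec q c e x0 x1 (Suc n)
     + int q ^ (cum_exp e (Suc (Suc n)) - cum_exp e n) * cleared_rec q c e x0 x1 n"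

lemma cleared_rec_eq:
  fixes X b :: "nat \<Rightarrow> 'a::field"
  assumes b: "\<And>n. b n = of_int (c n) / of_nat q ^ e n" and q: "(of_nat q :: 'a) \<noteq> 0"
    and X: "\<And>n. X (Suc (Suc n)) = b n * X (Suc n) + X n" "X 0 = of_int x0" "X 1 = of_int x1"
  shows "X n * of_nat q ^ cum_exp e n = of_int (cleared_rec q c e x0 x1 n)"
proof (induction n rule: induct_nat_012)
  case (ge2 n)
  define E where "E = cum_exp e"
  define Q where "Q = (of_nat q :: 'a) ^ E (Suc (Suc n))"
  have "E n \<le> E (Suc (Suc n))"
    unfolding E_def by (rule cum_exp_mono) simp
  then have Q_n: "Q = of_nat q ^ (E (Suc (Suc n)) - E n) * of_nat q ^ E n"
    unfolding Q_def by (simp add: power_add[symmetric])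
  have Q_Suc_n: "Q = of_nat q ^ e n * of_nat q ^ E (Suc n)"
    unfolding Q_def by (simp add: E_def power_add)
  have "X (Suc (Suc n)) * Q = b n * X (Suc n) * Q + X n * Q"
    by (simp add: X(1) algebra_simps)
  also have "b n * X (Suc n) * Q = (b n * of_nat q ^ e n) * (X (Suc n) * of_nat q ^ E (Suc n))"
    unfolding Q_Suc_n by (simp add: ac_simps)
  also have "X n * Q = of_nat q ^ (E (Suc (Suc n)) - E n) * (X n * of_nat q ^ E n)"
    unfolding Q_n by (simp add: ac_simps)
  also have "b n * of_nat q ^ e n = of_int (c n)"
    using q by (simp add: b)
  finally show ?case
    using ge2 by (simp add: E_def Q_def)
qed (use X in simp_all)

lemma abs_cleared_rec_step_le:
  fixes c u v :: int
  assumes "2 * \<bar>c\<bar> \<le> int q ^ (2 * e)" and "\<bar>u\<bar> \<le> int q ^ (2 * k)" and "\<bar>v\<bar> \<le> int q ^ (2 * l)"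
    and "2 \<le> int q ^ D" and "m = k + e" and "m = l + D"
  shows "\<bar>c * u + int q ^ D * v\<bar> \<le> int q ^ (2 * m)"
proof -
  have "2 * \<bar>c * u\<bar> \<le> int q ^ (2 * e) * int q ^ (2 * k)"
    unfolding abs_mult mult.assoc[symmetric] using assms(1,2) by (intro mult_mono) simp_all
  also have "\<dots> = int q ^ (2 * m)"
    by (simp add: assms(5) power_add[symmetric] algebra_simps)
  finally have u: "2 * \<bar>c * u\<bar> \<le> int q ^ (2 * m)" .
  have "2 * \<bar>int q ^ D * v\<bar> \<le> int q ^ D * int q ^ D * int q ^ (2 * l)"
    unfolding abs_mult mult.assoc[symmetric] using assms(3,4)
    by (intro mult_mono mult_right_mono) simp_all
  also have "\<dots> = int q ^ (2 * m)"
    by (simp add: assms(6) power_add[symmetric] algebra_simps)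
  finally have v: "2 * \<bar>int q ^ D * v\<bar> \<le> int q ^ (2 * m)" .
  show ?thesis
    using abs_triangle_ineq[of "c * u" "int q ^ D * v"] u v by linarith
qed

lemma cleared_rec_bound:
  assumes "q \<ge> 2" and "c 0 = 0"
    and c: "\<And>n. n \<ge> 1 \<Longrightarrow> e n \<ge> 1 \<and> 2 * \<bar>c n\<bar> \<le> int q ^ (2 * e n)"
    and "\<bar>x0\<bar> \<le> 1" and "\<bar>x1\<bar> \<le> 1"
  shows "\<bar>cleared_rec q c e x0 x1 n\<bar> \<le> int q ^ (2 * cum_exp e n)"
proof (induction n rule: induct_nat_012)
  case (ge2 n)
  define E where "E = cum_exp e"
  define D where "D = E (Suc (Suc n)) - E n"
  have E_D: "E (Suc (Suc n)) = E n + D"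
    using cum_exp_mono[of n "Suc (Suc n)" e] by (simp add: D_def E_def)
  show ?case
  proof (cases "n = 0")
    case True
    have "\<bar>int q ^ e 0 * x0\<bar> \<le> int q ^ e 0"
      using \<open>\<bar>x0\<bar> \<le> 1\<close> by (simp add: abs_mult mult_left_le)
    also have "\<dots> \<le> int q ^ (2 * e 0)"
      using \<open>q \<ge> 2\<close> by (intro power_increasing) auto
    finally show ?thesis
      using True \<open>c 0 = 0\<close> by simp
  next
    case False
    then have "e n \<ge> 1" and "2 * \<bar>c n\<bar> \<le> int q ^ (2 * e n)"
      using c by auto
    then have "D \<ge> 1"
      using cum_exp_mono[of n "Suc n" e] by (simp add: D_def E_def)
    then have "int q ^ 1 \<le> int q ^ D"
      using \<open>q \<ge> 2\<close> by (intro power_increasing) auto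
    then have "2 \<le> int q ^ D"
      using \<open>q \<ge> 2\<close> by (simp only: power_one_right)
    then have "\<bar>c n * cleared_rec q c e x0 x1 (Suc n) + int q ^ D * cleared_rec q c e x0 x1 n\<bar>
        \<le> int q ^ (2 * E (Suc (Suc n)))"
      using ge2 E_D \<open>2 * \<bar>c n\<bar> \<le> int q ^ (2 * e n)\<close>
      by (intro abs_cleared_rec_step_le[where e = "e n" and k = "E (Suc n)" and l = "E n"])
        (simp_all add: E_def)
    then show ?thesis
      by (simp add: D_def E_def)
  qed
qed (use assms in simp_all)

section \<open>Browkin continued fractions\<close>

locale browkin_cf = padic p N for p :: nat and N :: "'a::field_char_0 \<Rightarrow> real" +
  fixes \<alpha> :: 'a and b :: "nat \<Rightarrow> 'a"
  assumes quotient_ne: "\<forall>i. browkin_alpha p N \<alpha> i \<noteq> browkin_s p N (browkin_alpha p N \<alpha> i)"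
    and partial_quotient: "\<forall>i. b i = browkin_s p N (browkin_alpha p N \<alpha> i)"
    and b_0: "b 0 = 0"
begin

abbreviation cq :: "nat \<Rightarrow> 'a" where
  "cq i \<equiv> browkin_alpha p N \<alpha> i"

lemma cq_Suc: "cq (Suc i) = inverse (cq i - b i)"
  using partial_quotient by simp

(* Unfolding every complete quotient makes the simplifier blow up; cq_Suc is used instead. *)
declare browkin_alpha.simps(2) [simp del]

lemma cq_ne: "cq i - b i \<noteq> 0"
  using quotient_ne partial_quotient by simp

lemma cq_step: "(cq i - b i) * cq (Suc i) = 1"
  using cq_ne by (simp add: cq_Suc)

lemma cq_eq: "cq i = b i + inverse (cq (Suc i))"
  using cq_ne by (simp add: cq_Suc)

lemma N_cq_Suc_ge: "N (cq (Suc i)) \<ge> real p"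
proof -
  have "N (cq i - b i) \<le> 1 / real p"
    using N_sub_browkin_s partial_quotient by simp
  then have "real p \<le> 1 / N (cq i - b i)"
    using cq_ne p_ge_2 by (simp add: N_pos_iff field_simps)
  then show ?thesis
    by (simp add: cq_Suc N_divide inverse_eq_divide)
qed

lemma cq_periodic:
  assumes "\<forall>i\<ge>m. b (i + d) = b i"
  shows "cq m = cq (m + d)"
proof -
  have "real p > 1"
    using p_ge_2 by simp
  moreover have "cq (m + j) = b (m + j) + inverse (cq (m + Suc j))" for j
    using cq_eq[of "m + j"] by simp
  moreover have "cq (m + d + j) = b (m + j) + inverse (cq (m + d + Suc j))" for j
    using cq_eq[of "m + d + j"] assms[rule_format, of "m + j"] by (simp add: ac_simps)
  ultimately show ?thesis
    using complete_quotients_unique[of "real p" "\<lambda>j. cq (m + j)" "\<lambda>j. b (m + j)" "\<lambda>j. cq (m + d + j)"]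
      N_cq_Suc_ge by simp
qed

definition b_frac :: "nat \<Rightarrow> int \<times> nat" where
  "b_frac i = (SOME (c, e). e \<ge> 1 \<and> \<not> int p dvd c \<and> 2 * \<bar>c\<bar> < int p ^ (e + 1) \<and> b i = of_int c / of_nat p ^ e)"

definition b_num :: "nat \<Rightarrow> int" where
  "b_num i = (if i = 0 then 0 else fst (b_frac i))"

definition b_exp :: "nat \<Rightarrow> nat" where
  "b_exp i = (if i = 0 then 0 else snd (b_frac i))"

lemma b_frac_spec:
  assumes "i \<ge> 1"
  shows "b_exp i \<ge> 1" and "\<not> int p dvd b_num i" and "2 * \<bar>b_num i\<bar> < int p ^ (b_exp i + 1)"
    and "b i = of_int (b_num i) / of_nat p ^ b_exp i"
proof -
  obtain j where j: "i = Suc j"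
    using assms by (cases i) auto
  have "N (cq i) > 1"
    using N_cq_Suc_ge[of j] p_ge_2 j by simp
  then obtain c e where "e \<ge> 1" "\<not> int p dvd c" "2 * \<bar>c\<bar> < int p ^ (e + 1)"
    "browkin_s p N (cq i) = of_int c / of_nat p ^ e"
    by (rule browkin_s_frac)
  then have "(\<lambda>(c, e). e \<ge> 1 \<and> \<not> int p dvd c \<and> 2 * \<bar>c\<bar> < int p ^ (e + 1) \<and> b i = of_int c / of_nat p ^ e) (c, e)"
    using partial_quotient by simp
  then have "case b_frac i of (c, e) \<Rightarrow>
      e \<ge> 1 \<and> \<not> int p dvd c \<and> 2 * \<bar>c\<bar> < int p ^ (e + 1) \<and> b i = of_int c / of_nat p ^ e"
    unfolding b_frac_def by (rule someI)
  then show "b_exp i \<ge> 1" and "\<not> int p dvd b_num i" and "2 * \<bar>b_num i\<bar> < int p ^ (b_exp i + 1)"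
    and "b i = of_int (b_num i) / of_nat p ^ b_exp i"
    using assms by (auto simp: b_num_def b_exp_def split: prod.splits)
qed

lemma b_eq: "b i = of_int (b_num i) / of_nat p ^ b_exp i"
  using b_frac_spec(4)[of i] b_0 by (cases "i = 0") (simp_all add: b_num_def b_exp_def)

lemma N_b: "i \<ge> 1 \<Longrightarrow> N (b i) = real p ^ b_exp i"
  by (simp add: b_eq N_divide N_of_int_eq_1 b_frac_spec(2) N_p_power)

lemma b_num_bound: "i \<ge> 1 \<Longrightarrow> b_exp i \<ge> 1 \<and> 2 * \<bar>b_num i\<bar> \<le> int p ^ (2 * b_exp i)"
  using b_frac_spec(1,3)[of i] power_increasing[of "b_exp i + 1" "2 * b_exp i" "int p"] p_ge_2 by simp

abbreviation E :: "nat \<Rightarrow> nat" where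
  "E \<equiv> cum_exp b_exp"

definition B_int :: "nat \<Rightarrow> int" where
  "B_int = cleared_rec p b_num b_exp 1 0"

definition A_int :: "nat \<Rightarrow> int" where
  "A_int = cleared_rec p b_num b_exp 0 1"

lemma of_int_B_int: "of_int (B_int n) = browkin_B b n * of_nat p ^ E n"
  unfolding B_int_def using p_ge_2 by (intro cleared_rec_eq[symmetric, OF b_eq]) simp_all

lemma of_int_A_int: "of_int (A_int n) = browkin_A b n * of_nat p ^ E n"
  unfolding A_int_def using p_ge_2 by (intro cleared_rec_eq[symmetric, OF b_eq]) simp_all

lemma abs_B_int_le: "\<bar>B_int n\<bar> \<le> int p ^ (2 * E n)"
  unfolding B_int_def using p_ge_2 b_num_bound by (intro cleared_rec_bound) (simp_all add: b_num_def)

lemma abs_A_int_le: "\<bar>A_int n\<bar> \<le> int p ^ (2 * E n)"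
  unfolding A_int_def using p_ge_2 b_num_bound by (intro cleared_rec_bound) (simp_all add: b_num_def)

lemma E_less_E_Suc:
  assumes "2 \<le> n"
  shows "E n < E (Suc n)"
proof -
  obtain k where "n = Suc (Suc k)"
    using assms by (metis add_2_eq_Suc le_Suc_ex)
  then show ?thesis
    using b_frac_spec(1)[of "Suc k"] by simp
qed

lemma N_browkin_B: "N (browkin_B b (Suc (Suc n))) = real p ^ E (Suc (Suc n))"
proof (induction n rule: induct_nat_012)
  case 0
  then show ?case
    using b_0 by (simp add: b_exp_def)
next
  case 1
  then show ?case
    using N_b[of 1] b_0 by (simp add: b_exp_def)
next
  case (ge2 n)
  define m where "m = Suc (Suc n)"
  have "N (b m * browkin_B b (Suc m)) = real p ^ E (Suc (Suc m))"
    using ge2(2) N_b[of m] by (simp add: m_def N_mult power_add del: browkin_B.simps)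
  moreover have "real p ^ E m < real p ^ E (Suc (Suc m))"
    using E_less_E_Suc[of m] cum_exp_mono[of "Suc m" "Suc (Suc m)" b_exp] p_ge_2
    by (intro power_strict_increasing) (auto simp: m_def)
  moreover have "browkin_B b (Suc (Suc m)) = b m * browkin_B b (Suc m) + browkin_B b m"
    by simp
  ultimately show ?case
    using ge2(1) N_add_eq_left[of "browkin_B b m" "b m * browkin_B b (Suc m)"] by (simp add: m_def del: browkin_B.simps)
qed

definition err :: "nat \<Rightarrow> 'a" where
  "err j = \<alpha> * browkin_B b j - browkin_A b j"

lemma cq_mult_err: "cq n * err (Suc n) = - err n"
  using complete_quotient_mult_error[of cq b n] cq_step by (simp add: err_def)

lemma err_Suc_ne_0: "err (Suc n) \<noteq> 0"
proof (induction n)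
  case (Suc n)
  then show ?case
    using cq_mult_err[of "Suc n"] by auto
qed (simp add: err_def)

lemma N_err_decreasing:
  assumes "1 \<le> i" and "i < j"
  shows "N (err j) < N (err i)"
proof -
  have "N (err (Suc (Suc n))) < N (err (Suc n))" for n
  proof -
    have "N (cq (Suc n)) * N (err (Suc (Suc n))) = N (err (Suc n))"
      using cq_mult_err[of "Suc n"] by (simp add: N_mult[symmetric])
    moreover have "1 * N (err (Suc (Suc n))) < N (cq (Suc n)) * N (err (Suc (Suc n)))"
      using N_cq_Suc_ge[of n] p_ge_2 err_Suc_ne_0[of "Suc n"]
      by (intro mult_strict_right_mono) (auto simp: N_pos_iff)
    ultimately show ?thesis
      by simp
  qed
  then have "- N (err (Suc i')) < - N (err (Suc j'))" if "i' < j'" for i' j'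
    using lift_Suc_mono_less[of "\<lambda>k. - N (err (Suc k))" i' j'] that by simp
  moreover have "i = Suc (i - 1)" and "j = Suc (j - 1)"
    using assms by simp_all
  ultimately show ?thesis
    using assms by (metis diff_less_mono neg_less_iff_less)
qed

lemma N_browkin_B_le:
  assumes "2 \<le> i" and "i \<le> j"
  shows "0 < N (browkin_B b i)" and "N (browkin_B b i) \<le> N (browkin_B b j)"
proof -
  obtain i' where "i = Suc (Suc i')"
    using assms(1) by (metis add_2_eq_Suc le_Suc_ex)
  moreover obtain j' where "j = Suc (Suc j')"
    using assms by (metis add_2_eq_Suc le_Suc_ex le_trans)
  ultimately show "0 < N (browkin_B b i)" "N (browkin_B b i) \<le> N (browkin_B b j)"
    using assms p_ge_2 cum_exp_mono[of i j b_exp]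
    by (simp_all add: N_browkin_B power_increasing del: browkin_B.simps cum_exp.simps)
qed

lemma convergents_ne:
  assumes "2 \<le> i" and "i < j"
  shows "browkin_A b i * browkin_B b j \<noteq> browkin_A b j * browkin_B b i"
proof
  assume "browkin_A b i * browkin_B b j = browkin_A b j * browkin_B b i"
  then have "err j * browkin_B b i = err i * browkin_B b j"
    by (simp add: err_def algebra_simps)
  then have "N (err j) * N (browkin_B b i) = N (err i) * N (browkin_B b j)"
    by (simp add: N_mult[symmetric])
  moreover have "N (err j) * N (browkin_B b i) < N (err i) * N (browkin_B b j)"
  proof -
    have "N (err j) * N (browkin_B b i) < N (err i) * N (browkin_B b i)"
      using N_err_decreasing[of i j] N_browkin_B_le(1)[of i i] assms by simp
    also have "\<dots> \<le> N (err i) * N (browkin_B b j)"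
      using N_browkin_B_le(2)[of i j] assms by (simp add: N_nonneg mult_left_mono)
    finally show ?thesis .
  qed
  ultimately show False
    by simp
qed

lemma err_cross:
  assumes "cq m = cq n"
  shows "err m * err (Suc n) = err n * err (Suc m)"
proof -
  have "err m * err (Suc n) = - (cq m * err (Suc m)) * err (Suc n)"
    using cq_mult_err[of m] by simp
  also have "\<dots> = - (cq n * err (Suc n)) * err (Suc m)"
    using assms by simp
  also have "\<dots> = err n * err (Suc m)"
    using cq_mult_err[of n] by simp
  finally show ?thesis .
qed

definition conv_poly :: "nat \<Rightarrow> int poly" where
  "conv_poly j = [:- A_int j, B_int j:]"

lemma poly_conv_poly:
  "poly (map_poly of_int (conv_poly j)) x = of_nat p ^ E j * (browkin_B b j * x - browkin_A b j)"
  by (simp add: conv_poly_def map_poly_pCons of_int_A_int of_int_B_int algebra_simps)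

lemma abs_coeff_conv_poly_mult_le:
  "\<bar>coeff (conv_poly i * conv_poly j) l\<bar> \<le> 2 * int p ^ (2 * E i) * int p ^ (2 * E j)"
  unfolding conv_poly_def by (rule abs_coeff_linear_mult_le) (simp_all add: abs_A_int_le abs_B_int_le)

(* The powers of p give both products the factor p ^ (E (Suc m) + E (Suc n) - 1) at alpha,
   so that periodicity (err_cross) makes them cancel. *)
definition period_poly :: "nat \<Rightarrow> nat \<Rightarrow> int poly" where
  "period_poly m n =
     smult (int p ^ (E (Suc m) - E m - 1)) (conv_poly m * conv_poly (Suc n))
     - smult (int p ^ (E (Suc n) - E n - 1)) (conv_poly n * conv_poly (Suc m))"

lemma degree_period_poly: "degree (period_poly m n) \<le> 2"
proof -
  have "degree (conv_poly i * conv_poly j) \<le> 2" for i j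
    using degree_mult_le[of "conv_poly i" "conv_poly j"] degree_pCons_le[of _ "[:B_int _:]"]
    by (simp add: conv_poly_def)
  then show ?thesis
    unfolding period_poly_def by (intro degree_diff_le order_trans[OF degree_smult_le])
qed

lemma p_power_balance:
  assumes "2 \<le> m"
  shows "(of_nat p :: 'a) ^ (E (Suc m) - E m - 1) * of_nat p ^ E m = of_nat p ^ (E (Suc m) - 1)"
  using E_less_E_Suc[OF assms] by (simp add: power_add[symmetric])

lemma period_poly_root:
  assumes "2 \<le> m" and "2 \<le> n" and "cq m = cq n"
  shows "poly (map_poly of_int (period_poly m n)) \<alpha> = 0"
proof -
  have "poly (map_poly of_int (period_poly m n)) \<alpha>
      = (of_nat p ^ (E (Suc m) - E m - 1) * of_nat p ^ E m) * of_nat p ^ E (Suc n) * (err m * err (Suc n))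
        - (of_nat p ^ (E (Suc n) - E n - 1) * of_nat p ^ E n) * of_nat p ^ E (Suc m) * (err n * err (Suc m))"
    by (simp add: period_poly_def map_poly_of_int_diff map_poly_of_int_smult map_poly_of_int_mult
        poly_conv_poly err_def algebra_simps)
  also have "\<dots> = of_nat p ^ (E (Suc m) - 1) * of_nat p ^ E (Suc n) * (err m * err (Suc n))
        - of_nat p ^ (E (Suc n) - 1) * of_nat p ^ E (Suc m) * (err m * err (Suc n))"
    unfolding p_power_balance[OF assms(1)] p_power_balance[OF assms(2)] err_cross[OF assms(3)] ..
  also have "\<dots> = 0"
    using E_less_E_Suc[OF assms(1)] E_less_E_Suc[OF assms(2)] by (simp add: power_add[symmetric] add.commute)
  finally show ?thesis .
qed

lemma period_poly_ne_0:
  assumes "2 \<le> m" and "m < n"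
  shows "period_poly m n \<noteq> 0"
proof
  assume "period_poly m n = 0"
  define x where "x = browkin_A b (Suc m) / browkin_B b (Suc m)"
  have B_ne_0: "browkin_B b (Suc m) \<noteq> 0"
    using N_browkin_B_le(1)[of "Suc m" "Suc m"] assms by auto
  define L where "L j = poly (map_poly of_int (conv_poly j)) x" for j
  have "L (Suc m) = 0"
    using B_ne_0 by (simp add: L_def poly_conv_poly x_def del: browkin_B.simps browkin_A.simps)
  have "0 = poly (map_poly of_int (period_poly m n)) x"
    using \<open>period_poly m n = 0\<close> by simp
  also have "\<dots> = of_nat p ^ (E (Suc m) - E m - 1) * (L m * L (Suc n))
      - of_nat p ^ (E (Suc n) - E n - 1) * (L n * L (Suc m))"
    by (simp add: L_def period_poly_def map_poly_of_int_diff map_poly_of_int_smult map_poly_of_int_mult)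
  finally have "L m * L (Suc n) = 0"
    using \<open>L (Suc m) = 0\<close> p_ge_2 by simp
  then have "poly (map_poly of_int (conv_poly m)) x * poly (map_poly of_int (conv_poly (Suc n))) x = 0"
    by (simp add: L_def)
  moreover have "poly (map_poly of_int (conv_poly m)) x \<noteq> 0"
  proof -
    have "browkin_B b m * x - browkin_A b m
        = (browkin_A b (Suc m) * browkin_B b m - browkin_A b m * browkin_B b (Suc m)) / browkin_B b (Suc m)"
      using B_ne_0 by (simp add: x_def field_simps del: browkin_B.simps browkin_A.simps)
    then show ?thesis
      using B_ne_0 p_ge_2 by (simp add: poly_conv_poly browkin_A_B_det del: browkin_B.simps browkin_A.simps)
  qed
  moreover have "poly (map_poly of_int (conv_poly (Suc n))) x \<noteq> 0"
  proof -
    have "browkin_B b (Suc n) * x - browkin_A b (Suc n)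
        = (browkin_A b (Suc m) * browkin_B b (Suc n) - browkin_A b (Suc n) * browkin_B b (Suc m)) / browkin_B b (Suc m)"
      using B_ne_0 by (simp add: x_def field_simps del: browkin_B.simps browkin_A.simps)
    then show ?thesis
      using B_ne_0 p_ge_2 convergents_ne[of "Suc m" "Suc n"] assms
      by (simp add: poly_conv_poly del: browkin_B.simps browkin_A.simps)
  qed
  ultimately show False
    by simp
qed

lemma abs_coeff_period_poly_le:
  assumes "2 \<le> m" and "2 \<le> n"
  shows "int p ^ 2 * \<bar>coeff (period_poly m n) i\<bar> \<le> 4 * int p ^ (2 * E (Suc m) + 2 * E (Suc n))"
proof -
  have summand: "int p ^ 2 * \<bar>int p ^ (E (Suc j) - E j - 1) * coeff (conv_poly j * conv_poly l) i\<bar>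
      \<le> 2 * int p ^ (2 * E (Suc j) + 2 * E l)" if "2 \<le> j" for j l
  proof -
    have "E j < E (Suc j)"
      using E_less_E_Suc[OF that] .
    have k: "E (Suc j) - E j - 1 + 2 = E (Suc j) - E j + 1"
      using \<open>E j < E (Suc j)\<close> by simp
    have "int p ^ 2 * \<bar>int p ^ (E (Suc j) - E j - 1) * coeff (conv_poly j * conv_poly l) i\<bar>
        = int p ^ (E (Suc j) - E j - 1 + 2) * \<bar>coeff (conv_poly j * conv_poly l) i\<bar>"
      by (simp add: abs_mult power_add power2_eq_square)
    also have "\<dots> = int p ^ (E (Suc j) - E j + 1) * \<bar>coeff (conv_poly j * conv_poly l) i\<bar>"
      unfolding k ..
    also have "\<dots> \<le> int p ^ (E (Suc j) - E j + 1) * (2 * int p ^ (2 * E j) * int p ^ (2 * E l))"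
      by (intro mult_left_mono abs_coeff_conv_poly_mult_le) simp
    also have "\<dots> = 2 * int p ^ (E (Suc j) + E j + 1 + 2 * E l)"
      using \<open>E j < E (Suc j)\<close> by (simp add: power_add[symmetric] ac_simps)
    also have "\<dots> \<le> 2 * int p ^ (2 * E (Suc j) + 2 * E l)"
      using \<open>E j < E (Suc j)\<close> p_ge_2 by (intro mult_left_mono power_increasing) auto
    finally show ?thesis .
  qed
  have "int p ^ 2 * \<bar>coeff (period_poly m n) i\<bar>
      \<le> int p ^ 2 * \<bar>int p ^ (E (Suc m) - E m - 1) * coeff (conv_poly m * conv_poly (Suc n)) i\<bar>
        + int p ^ 2 * \<bar>int p ^ (E (Suc n) - E n - 1) * coeff (conv_poly n * conv_poly (Suc m)) i\<bar>"
    unfolding period_poly_def distrib_left[symmetric] by (intro mult_left_mono) (simp_all add: abs_triangle_ineq4)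
  also have "\<dots> \<le> 4 * int p ^ (2 * E (Suc m) + 2 * E (Suc n))"
    using summand[OF assms(1), of "Suc n"] summand[OF assms(2), of "Suc m"] by (simp add: add.commute)
  finally show ?thesis .
qed

lemma N_browkin_B_Suc:
  assumes "1 \<le> m"
  shows "N (browkin_B b (Suc m)) = real p ^ E (Suc m)"
  using N_browkin_B[of "m - 1"] assms by (simp del: browkin_B.simps cum_exp.simps)

lemma Max_coeffs_period_poly_le:
  assumes "2 \<le> m" and "m < n"
  shows "real p ^ 2 * Max (abs ` set (coeffs (period_poly m n)))
    \<le> 4 * (N (browkin_B b (Suc n)))\<^sup>2 * (N (browkin_B b (Suc m)))\<^sup>2"
proof -
  obtain i where "Max (abs ` set (coeffs (period_poly m n))) = \<bar>coeff (period_poly m n) i\<bar>"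
    using Max_abs_coeffs_attained[OF period_poly_ne_0[OF assms]] by blast
  then show ?thesis
    using abs_coeff_period_poly_le[of m n i] assms
    unfolding of_int_le_iff[where 'a = real, symmetric]
    by (simp add: N_browkin_B_Suc power_add mult.commute flip: power_mult)
qed

lemma naive_height_le_period:
  assumes "2 \<le> m" and "m < n" and "cq m = cq n"
  shows "naive_height \<alpha> \<le> 8 / real p ^ 2 * (N (browkin_B b (Suc n)))\<^sup>2 * (N (browkin_B b (Suc m)))\<^sup>2"
proof -
  define X where "X = (N (browkin_B b (Suc n)))\<^sup>2 * (N (browkin_B b (Suc m)))\<^sup>2"
  have "naive_height \<alpha> \<le> Max (abs ` set (coeffs (period_poly m n)))"
    using period_poly_ne_0 degree_period_poly period_poly_root assms
    by (intro naive_height_le_quadratic) simp_all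
  then have "real p ^ 2 * naive_height \<alpha> \<le> real p ^ 2 * Max (abs ` set (coeffs (period_poly m n)))"
    by (simp add: mult_left_mono)
  also have "\<dots> \<le> 4 * X"
    using Max_coeffs_period_poly_le[OF assms(1,2)] by (simp add: X_def mult.assoc)
  also have "\<dots> \<le> 8 * X"
    by (simp add: X_def)
  finally show ?thesis
    using p_ge_2 by (simp add: X_def field_simps)
qed

end

theorem lemma3:
  fixes p k t :: nat and N :: "'a::field_char_0 \<Rightarrow> real" and \<alpha> :: 'a and b :: "nat \<Rightarrow> 'a"
  assumes "prime p" and "odd p"
    and "padic_field p N"
    and "k \<ge> 1"
    and "\<forall>i. browkin_alpha p N \<alpha> i \<noteq> browkin_s p N (browkin_alpha p N \<alpha> i)"
    and "\<forall>i. b i = browkin_s p N (browkin_alpha p N \<alpha> i)"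
    and "b 0 = 0"
    and "\<forall>i\<ge>k + 1. b (i + (t + 1)) = b i"
  shows "naive_height \<alpha> \<le> 8 / (real p)^2 * (N (browkin_B b (k + t + 3)))^2 * (N (browkin_B b (k + 2)))^2"
proof -
  interpret browkin_cf p N \<alpha> b
    using assms by unfold_locales auto
  have "cq (k + 1) = cq (k + t + 2)"
    using cq_periodic[of "k + 1" "t + 1"] assms(8) by (simp add: ac_simps)
  then show ?thesis
    using naive_height_le_period[of "k + 1" "k + t + 2"] \<open>k \<ge> 1\<close>
    by (simp add: eval_nat_numeral del: browkin_B.simps)
qed

end
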